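(* Let $F$ be a commutative field and let $k,h,n$ be integers with $1\le k\le h\le n-1$. If $\mathrm{PG}(n,F)$ contains a linear complex of $h$-subspaces having no singular $(h-1)$-subspace, then $\mathrm{PG}(n+k-h,F)$ contains a linear complex of $k$-subspaces having no singular $(k-1)$-subspace.
   Context: A $d$-subspace is a projective subspace of dimension $d$. A linear complex of $h$-subspaces of $\mathrm{PG}(n,F)$ is the set of $h$-subspaces whose Plücker image ($F(v_0\wedge\cdots\wedge v_h)$ for a basis $v_0,\dots,v_h$ of the corresponding subspace of $F^{n+1}$) lies in a fixed hyperplane of $\mathbb P(\bigwedge^{h+1}F^{n+1})$. An $(h-1)$-subspace $U$ is singular for a linear complex $K$ of $h$-subspaces if every $h$-subspace containing $U$ belongs to $K$. *)

theory Defs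
  imports Main "Jordan_Normal_Form.Determinant"
begin

text \<open>Vectors of F^(n+1) are represented as functions nat => F vanishing outside {0..n}.
  A projective d-subspace of PG(n,F) is a (d+1)-dimensional linear subspace of F^(n+1),
  represented as a set of vectors.\<close>

definition in_Fn :: "nat \<Rightarrow> (nat \<Rightarrow> 'a::field) \<Rightarrow> bool" where
  "in_Fn n v \<longleftrightarrow> (\<forall>i>n. v i = 0)"

definition lin_comb :: "(nat \<Rightarrow> 'a::field) list \<Rightarrow> (nat \<Rightarrow> 'a) \<Rightarrow> (nat \<Rightarrow> 'a)" where
  "lin_comb vs c = (\<lambda>i. \<Sum>j<length vs. c j * (vs ! j) i)"

definition lspan :: "(nat \<Rightarrow> 'a::field) list \<Rightarrow> (nat \<Rightarrow> 'a) set" where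
  "lspan vs = {lin_comb vs c | c. True}"

definition lin_indep :: "(nat \<Rightarrow> 'a::field) list \<Rightarrow> bool" where
  "lin_indep vs \<longleftrightarrow> (\<forall>c. lin_comb vs c = (\<lambda>_. 0) \<longrightarrow> (\<forall>j<length vs. c j = 0))"

definition is_basis :: "nat \<Rightarrow> nat \<Rightarrow> (nat \<Rightarrow> 'a::field) list \<Rightarrow> (nat \<Rightarrow> 'a) set \<Rightarrow> bool" where
  "is_basis n d vs W \<longleftrightarrow> length vs = d + 1 \<and> (\<forall>v\<in>set vs. in_Fn n v) \<and> lin_indep vs \<and> W = lspan vs"

definition proj_subspace :: "nat \<Rightarrow> nat \<Rightarrow> (nat \<Rightarrow> 'a::field) set \<Rightarrow> bool" where
  "proj_subspace n d W \<longleftrightarrow> (\<exists>vs. is_basis n d vs W)"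

text \<open>Pluecker coordinate of v_0 wedge ... wedge v_h with respect to the standard basis
  e_S of the exterior power (S a (h+1)-subset of {0..n}, listed increasingly):
  the maximal minor of the coordinate matrix on the columns S.\<close>
definition pluecker :: "(nat \<Rightarrow> 'a::field) list \<Rightarrow> nat set \<Rightarrow> 'a" where
  "pluecker vs S = det (mat (length vs) (length vs)
      (\<lambda>(i, j). (vs ! i) (sorted_list_of_set S ! j)))"

definition wedge_index :: "nat \<Rightarrow> nat \<Rightarrow> nat set set" where
  "wedge_index n h = {S. S \<subseteq> {..n} \<and> card S = h + 1}"

text \<open>A linear complex of h-subspaces of PG(n,F): the h-subspaces whose Pluecker image lies in
  the hyperplane  sum_S c_S x_S = 0  of P(wedge^(h+1) F^(n+1)), c a nonzero coefficient vector.\<close>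
definition linear_complex :: "nat \<Rightarrow> nat \<Rightarrow> (nat \<Rightarrow> 'a::field) set set \<Rightarrow> bool" where
  "linear_complex n h K \<longleftrightarrow>
     (\<exists>c :: nat set \<Rightarrow> 'a.
        (\<exists>S\<in>wedge_index n h. c S \<noteq> 0) \<and>
        K = {W. \<exists>vs. is_basis n h vs W \<and> (\<Sum>S\<in>wedge_index n h. c S * pluecker vs S) = 0})"

definition singular :: "nat \<Rightarrow> nat \<Rightarrow> (nat \<Rightarrow> 'a::field) set set \<Rightarrow> (nat \<Rightarrow> 'a) set \<Rightarrow> bool" where
  "singular n h K U \<longleftrightarrow> proj_subspace n (h - 1) U \<and>
     (\<forall>W. proj_subspace n h W \<and> U \<subseteq> W \<longrightarrow> W \<in> K)"

end

theory Submission
  imports Defs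
begin

text \<open>It suffices to go down one step, from h-subspaces of PG(n+1,F) to (h-1)-subspaces
  of PG(n,F), and iterate. Write e for the last unit vector of F^(n+2). The h-subspaces
  through e correspond to the (h-1)-subspaces of the coordinate hyperplane PG(n,F), and
  the Pluecker coordinates of (v_0,...,v_(h-1),e) are those of (v_0,...,v_(h-1)) with
  the index n+1 removed. Hence contracting the coefficient vector c of the complex to
  c'(T) = c(T \<union> {n+1}) defines a linear complex of (h-1)-subspaces of PG(n,F): if c' were
  zero, or if U were singular for it, then the span of e and any (h-2)-subspace, resp.
  of e and U, would be singular for the original complex.\<close>

definition std_basis_vec :: "nat \<Rightarrow> nat \<Rightarrow> 'a::field" where
  "std_basis_vec j = (\<lambda>i. if i = j then 1 else 0)"

lemma lin_comb_append:
  "lin_comb (xs @ [x]) c = (\<lambda>i. lin_comb xs c i + c (length xs) * x i)"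
  unfolding lin_comb_def by (auto simp: nth_append)

lemma lin_comb_cong:
  "(\<And>j. j < length vs \<Longrightarrow> c j = d j) \<Longrightarrow> lin_comb vs c = lin_comb vs d"
  unfolding lin_comb_def by auto

lemma lin_comb_add:
  "lin_comb vs (\<lambda>j. c j + d j) = (\<lambda>i. lin_comb vs c i + lin_comb vs d i)"
  unfolding lin_comb_def by (auto simp: algebra_simps sum.distrib)

lemma lin_comb_smult:
  "lin_comb vs (\<lambda>j. a * c j) = (\<lambda>i. a * lin_comb vs c i)"
  unfolding lin_comb_def by (auto simp: algebra_simps sum_distrib_left)

lemma lspan_add: "u \<in> lspan vs \<Longrightarrow> w \<in> lspan vs \<Longrightarrow> (\<lambda>i. u i + w i) \<in> lspan vs"
  unfolding lspan_def by (auto simp: lin_comb_add[symmetric])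

lemma lspan_smult: "u \<in> lspan vs \<Longrightarrow> (\<lambda>i. a * u i) \<in> lspan vs"
  unfolding lspan_def by (auto simp: lin_comb_smult[symmetric])

lemma lspan_diff: "u \<in> lspan vs \<Longrightarrow> w \<in> lspan vs \<Longrightarrow> (\<lambda>i. u i - w i) \<in> lspan vs"
  using lspan_add[of u vs "\<lambda>i. (-1) * w i"] lspan_smult[of w vs "-1"] by simp

lemma lspan_nth: "j < length vs \<Longrightarrow> vs ! j \<in> lspan vs"
proof -
  assume j: "j < length vs"
  have "lin_comb vs (\<lambda>l. if l = j then 1 else 0) = vs ! j"
    unfolding lin_comb_def using j
    by (auto simp: if_distrib[where f="\<lambda>a. a * _"] sum.delta cong: if_cong)
  then show ?thesis unfolding lspan_def by (metis (mono_tags, lifting) mem_Collect_eq)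
qed

lemma lspan_subset_append: "lspan xs \<subseteq> lspan (xs @ [x])"
proof
  fix u assume "u \<in> lspan xs"
  then obtain c where u: "u = lin_comb xs c" unfolding lspan_def by auto
  have "lin_comb (xs @ [x]) (c(length xs := 0)) = lin_comb xs (c(length xs := 0))"
    unfolding lin_comb_append by auto
  also have "\<dots> = u" unfolding u by (rule lin_comb_cong) auto
  finally show "u \<in> lspan (xs @ [x])" unfolding lspan_def by blast
qed

lemma lspan_in_Fn: "\<forall>v\<in>set vs. in_Fn n v \<Longrightarrow> u \<in> lspan vs \<Longrightarrow> in_Fn n u"
  unfolding lspan_def lin_comb_def in_Fn_def by (auto intro!: sum.neutral)

lemma lin_indep_append:
  assumes ind: "lin_indep xs" and x: "x \<notin> lspan xs"
  shows "lin_indep (xs @ [x])"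
  unfolding lin_indep_def
proof (intro allI impI)
  fix c j
  assume z: "lin_comb (xs @ [x]) c = (\<lambda>_. 0)" and j: "j < length (xs @ [x])"
  let ?m = "length xs"
  have z': "\<And>i. lin_comb xs c i + c ?m * x i = 0" using z unfolding lin_comb_append by meson
  have cm: "c ?m = 0"
  proof (rule ccontr)
    assume ne: "c ?m \<noteq> 0"
    have "lin_comb xs (\<lambda>l. (- 1 / c ?m) * c l) = x"
    proof
      fix i show "lin_comb xs (\<lambda>l. (- 1 / c ?m) * c l) i = x i"
        unfolding lin_comb_smult using z'[of i] ne by (auto simp: field_simps add_eq_0_iff)
    qed
    then have "x \<in> lspan xs" unfolding lspan_def by blast
    with x show False by simp
  qed
  have "lin_comb xs c = (\<lambda>_. 0)" using z' cm by auto
  then have "\<forall>l<?m. c l = 0" using ind unfolding lin_indep_def by blast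
  then show "c j = 0" using j cm by (cases "j < ?m") (auto simp: less_Suc_eq)
qed

lemma in_Fn_std_basis_vec: "j \<le> n \<Longrightarrow> in_Fn n (std_basis_vec j)"
  unfolding in_Fn_def std_basis_vec_def by auto

lemma lin_indep_std_basis_vecs: "lin_indep (map std_basis_vec [0..<m])"
  unfolding lin_indep_def
proof (intro allI impI)
  fix c j assume z: "lin_comb (map std_basis_vec [0..<m]) c = (\<lambda>_. 0)"
    and j: "j < length (map std_basis_vec [0..<m] :: (nat \<Rightarrow> 'a) list)"
  have "lin_comb (map std_basis_vec [0..<m]) c j = (\<Sum>l<m. c l * (if j = l then 1 else 0))"
    unfolding lin_comb_def std_basis_vec_def by simp
  also have "\<dots> = c j" using j by (simp add: if_distrib[where f="\<lambda>a. _ * a"] cong: if_cong)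
  finally show "c j = 0" using z by metis
qed

lemma std_basis_vec_notin_lspan:
  "\<forall>v\<in>set vs. in_Fn p v \<Longrightarrow> std_basis_vec (Suc p) \<notin> lspan vs"
  using lspan_in_Fn[of vs p "std_basis_vec (Suc p)"] unfolding in_Fn_def std_basis_vec_def
  by (metis lessI one_neq_zero)

lemma lspan_coeff_mat:
  fixes ws ys :: "(nat \<Rightarrow> 'a::field) list"
  assumes "\<And>i. i < m \<Longrightarrow> ws ! i \<in> lspan ys" and ly: "length ys = m"
  obtains A where "A \<in> carrier_mat m m" "\<And>i. i < m \<Longrightarrow> ws ! i = lin_comb ys (\<lambda>j. A $$ (i, j))"
proof -
  have "\<forall>i. \<exists>c. i < m \<longrightarrow> ws ! i = lin_comb ys c" using assms(1) unfolding lspan_def by blast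
  then obtain C where C: "\<And>i. i < m \<Longrightarrow> ws ! i = lin_comb ys (C i)" by metis
  show ?thesis
  proof
    show "mat m m (\<lambda>(i, j). C i j) \<in> carrier_mat m m" by simp
    fix i assume i: "i < m"
    show "ws ! i = lin_comb ys (\<lambda>j. mat m m (\<lambda>(i, j). C i j) $$ (i, j))"
      unfolding C[OF i] by (rule lin_comb_cong) (use i ly in auto)
  qed
qed

lemma det_nonzero_if_lin_indep_lin_comb:
  fixes ws ys :: "(nat \<Rightarrow> 'a::field) list"
  assumes ind: "lin_indep ws" and lw: "length ws = m" and ly: "length ys = m"
    and A: "A \<in> carrier_mat m m"
    and rel: "\<And>i. i < m \<Longrightarrow> ws ! i = lin_comb ys (\<lambda>j. A $$ (i, j))"
  shows "det A \<noteq> 0"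
proof
  assume "det A = 0"
  then have "det (transpose_mat A) = 0" using det_transpose[OF A] by simp
  then obtain v where v: "v \<in> carrier_vec m" "v \<noteq> 0\<^sub>v m" "transpose_mat A *\<^sub>v v = 0\<^sub>v m"
    using det_0_iff_vec_prod_zero_field[of "transpose_mat A" m] A by auto
  have col: "(\<Sum>i<m. A $$ (i, j) * v $ i) = 0" if j: "j < m" for j
  proof -
    have "(transpose_mat A *\<^sub>v v) $ j = 0" using v(3) j by simp
    then show ?thesis using j A v(1)
      by (simp add: scalar_prod_def atLeast0LessThan mult.commute)
  qed
  have "lin_comb ws (\<lambda>i. v $ i) = (\<lambda>_. 0)"
  proof
    fix t
    have "lin_comb ws (\<lambda>i. v $ i) t = (\<Sum>i<m. v $ i * (\<Sum>j<m. A $$ (i, j) * (ys ! j) t))"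
      unfolding lin_comb_def lw using rel ly by (auto simp: lin_comb_def intro!: sum.cong)
    also have "\<dots> = (\<Sum>j<m. \<Sum>i<m. A $$ (i, j) * v $ i * (ys ! j) t)"
      by (subst sum.swap) (simp add: sum_distrib_left mult.assoc mult.left_commute)
    also have "\<dots> = (\<Sum>j<m. (\<Sum>i<m. A $$ (i, j) * v $ i) * (ys ! j) t)"
      by (simp add: sum_distrib_right)
    also have "\<dots> = 0" using col by simp
    finally show "lin_comb ws (\<lambda>i. v $ i) t = 0" .
  qed
  then have "\<forall>i<m. v $ i = 0" using ind lw unfolding lin_indep_def by blast
  then have "v = 0\<^sub>v m" using v(1) by (intro eq_vecI) auto
  with v(2) show False by simp
qed

lemma not_lin_indep_in_lspan_of_shorter:
  fixes ws ys :: "(nat \<Rightarrow> 'a::field) list"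
  assumes ind: "lin_indep ws" and lw: "length ws = Suc (length ys)"
    and sp: "\<And>i. i < length ws \<Longrightarrow> ws ! i \<in> lspan ys"
  shows False
proof -
  let ?m = "length ys"
  have sp': "\<And>i. i < Suc ?m \<Longrightarrow> ws ! i \<in> lspan (ys @ [\<lambda>_. 0])"
    using sp lw lspan_subset_append by (metis subsetD)
  obtain A where "A \<in> carrier_mat (Suc ?m) (Suc ?m)"
    and rel: "\<And>i. i < Suc ?m \<Longrightarrow> ws ! i = lin_comb (ys @ [\<lambda>_. 0]) (\<lambda>j. A $$ (i, j))"
    using lspan_coeff_mat[OF sp' length_append_singleton] by blast
  (* The last column of the coefficient matrix may be replaced by zeros, as it multiplies
     the zero vector; then det B = 0 contradicts the independence of ws. *)
  define B where "B = mat (Suc ?m) (Suc ?m) (\<lambda>(i, j). if j < ?m then A $$ (i, j) else 0)"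
  have B: "B \<in> carrier_mat (Suc ?m) (Suc ?m)" unfolding B_def by simp
  have "ws ! i = lin_comb (ys @ [\<lambda>_. 0]) (\<lambda>j. B $$ (i, j))" if i: "i < Suc ?m" for i
    unfolding rel[OF i] lin_comb_append by (simp add: lin_comb_def B_def i)
  then have "det B \<noteq> 0" by (intro det_nonzero_if_lin_indep_lin_comb[OF ind lw _ B]) simp_all
  moreover have "det B = 0"
    using laplace_expansion_column[OF B, of ?m] by (simp add: B_def)
  ultimately show False by simp
qed

lemma pluecker_lin_comb:
  fixes ws ys :: "(nat \<Rightarrow> 'a::field) list"
  assumes lw: "length ws = m" and ly: "length ys = m" and A: "A \<in> carrier_mat m m"
    and rel: "\<And>i. i < m \<Longrightarrow> ws ! i = lin_comb ys (\<lambda>j. A $$ (i, j))"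
  shows "pluecker ws S = det A * pluecker ys S"
proof -
  let ?s = "sorted_list_of_set S"
  let ?Y = "mat m m (\<lambda>(i, j). (ys ! i) (?s ! j))"
  have "mat m m (\<lambda>(i, j). (ws ! i) (?s ! j)) = A * ?Y"
  proof (rule eq_matI)
    fix i j assume "i < dim_row (A * ?Y)" and "j < dim_col (A * ?Y)"
    then have i: "i < m" and j: "j < m" using A by auto
    have "(A * ?Y) $$ (i, j) = (\<Sum>l = 0..<m. A $$ (i, l) * (ys ! l) (?s ! j))"
      using i j A by (simp add: scalar_prod_def)
    also have "\<dots> = (ws ! i) (?s ! j)"
      using rel[OF i] ly unfolding lin_comb_def by (simp add: atLeast0LessThan)
    finally show "mat m m (\<lambda>(i, j). (ws ! i) (?s ! j)) $$ (i, j) = (A * ?Y) $$ (i, j)"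
      using i j by simp
  qed (use A in auto)
  then show ?thesis unfolding pluecker_def lw ly
    by (simp add: det_mult[OF A, of ?Y])
qed

lemma pluecker_lspan_proportional:
  fixes ws ys :: "(nat \<Rightarrow> 'a::field) list"
  assumes ind: "lin_indep ws" and lw: "length ws = m" and ly: "length ys = m"
    and sp: "\<And>i. i < m \<Longrightarrow> ws ! i \<in> lspan ys"
  obtains d where "d \<noteq> 0" "\<And>S. pluecker ws S = d * pluecker ys S"
proof -
  obtain A where A: "A \<in> carrier_mat m m" "\<And>i. i < m \<Longrightarrow> ws ! i = lin_comb ys (\<lambda>j. A $$ (i, j))"
    using lspan_coeff_mat[OF sp ly] by blast
  show ?thesis
    by (rule that[OF det_nonzero_if_lin_indep_lin_comb[OF ind lw ly A] pluecker_lin_comb[OF lw ly A]])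
qed

lemma sorted_list_of_set_snoc_Max:
  assumes fin: "finite S" and a: "a \<in> S" and le: "\<And>x. x \<in> S \<Longrightarrow> x \<le> (a::nat)"
  shows "sorted_list_of_set S = sorted_list_of_set (S - {a}) @ [a]"
proof -
  let ?l = "sorted_list_of_set (S - {a}) @ [a]"
  have "sorted_wrt (<) ?l"
    using fin le by (auto simp: sorted_wrt_append le_neq_implies_less)
  moreover have "set ?l = S" using fin a by auto
  moreover have "length ?l = card S"
    using fin a card_gt_0_iff[of S] by (auto simp: card_Diff_singleton)
  ultimately show ?thesis using sorted_list_of_set_unique[of S ?l] fin by auto
qed

lemma pluecker_append_std_basis_vec:
  fixes vs :: "(nat \<Rightarrow> 'a::field) list"
  assumes lv: "length vs = Suc m" and S: "S \<subseteq> {..Suc p}" and cS: "card S = Suc (Suc m)"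
  shows "pluecker (vs @ [std_basis_vec (Suc p)]) S
       = (if Suc p \<in> S then pluecker vs (S - {Suc p}) else 0)"
proof -
  let ?e = "std_basis_vec (Suc p) :: nat \<Rightarrow> 'a"
  let ?s = "sorted_list_of_set S"
  let ?M = "mat (Suc (Suc m)) (Suc (Suc m)) (\<lambda>(i, j). ((vs @ [?e]) ! i) (?s ! j))"
  have fin: "finite S" using S finite_subset by blast
  have ls: "length ?s = Suc (Suc m)" using cS by simp
  have M: "?M \<in> carrier_mat (Suc (Suc m)) (Suc (Suc m))" by simp
  have pl: "pluecker (vs @ [?e]) S = (\<Sum>j<Suc (Suc m). ?e (?s ! j) * cofactor ?M (Suc m) j)"
    unfolding pluecker_def using laplace_expansion_row[OF M, of "Suc m"] lv by (simp add: nth_append)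
  show ?thesis
  proof (cases "Suc p \<in> S")
    case False
    have "?s ! j \<noteq> Suc p" if "j < Suc (Suc m)" for j
      using False that ls fin by (metis nth_mem set_sorted_list_of_set)
    then show ?thesis using False unfolding pl by (simp add: std_basis_vec_def)
  next
    case True
    let ?s' = "sorted_list_of_set (S - {Suc p})"
    have s_snoc: "?s = ?s' @ [Suc p]"
      by (rule sorted_list_of_set_snoc_Max[OF fin True]) (use S in auto)
    have ls': "length ?s' = Suc m" using ls s_snoc by simp
    have "?e (?s ! j) = (if j = Suc m then 1 else 0)" if j: "j < Suc (Suc m)" for j
    proof -
      have "?s' ! j \<in> S - {Suc p}" if "j < Suc m"
        using that ls' fin by (metis finite_Diff nth_mem set_sorted_list_of_set)
      then show ?thesis using j s_snoc ls' by (auto simp: nth_append std_basis_vec_def less_Suc_eq)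
    qed
    then have "pluecker (vs @ [?e]) S = cofactor ?M (Suc m) (Suc m)"
      unfolding pl by (simp add: if_distrib[where f="\<lambda>a. a * _"] cong: if_cong)
    also have "\<dots> = det (mat_delete ?M (Suc m) (Suc m))"
      unfolding cofactor_def by simp
    also have "mat_delete ?M (Suc m) (Suc m) = mat (Suc m) (Suc m) (\<lambda>(i, j). (vs ! i) (?s' ! j))"
      by (rule eq_matI) (use lv ls' in \<open>auto simp: mat_delete_def s_snoc nth_append\<close>)
    finally show ?thesis using True unfolding pluecker_def lv by simp
  qed
qed

definition complex_form :: "nat \<Rightarrow> nat \<Rightarrow> (nat set \<Rightarrow> 'a::field) \<Rightarrow> (nat \<Rightarrow> 'a) list \<Rightarrow> 'a" where
  "complex_form n h c vs = (\<Sum>S\<in>wedge_index n h. c S * pluecker vs S)"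

definition complex_of :: "nat \<Rightarrow> nat \<Rightarrow> (nat set \<Rightarrow> 'a::field) \<Rightarrow> (nat \<Rightarrow> 'a) set set" where
  "complex_of n h c = {W. \<exists>vs. is_basis n h vs W \<and> complex_form n h c vs = 0}"

definition contract :: "nat \<Rightarrow> (nat set \<Rightarrow> 'a) \<Rightarrow> nat set \<Rightarrow> 'a" where
  "contract q c T = c (insert q T)"

lemma linear_complex_iff_complex_of:
  "linear_complex n h K \<longleftrightarrow> (\<exists>c. (\<exists>S\<in>wedge_index n h. c S \<noteq> 0) \<and> K = complex_of n h c)"
  unfolding linear_complex_def complex_of_def complex_form_def ..

lemma complex_form_proportional:
  "(\<And>S. pluecker ws S = d * pluecker vs S) \<Longrightarrow> complex_form n h c ws = d * complex_form n h c vs"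
  unfolding complex_form_def by (simp add: sum_distrib_left algebra_simps)

lemma finite_wedge_index: "finite (wedge_index n h)"
  unfolding wedge_index_def by (rule finite_subset[of _ "Pow {..n}"]) auto

lemma wedge_index_Suc_containing:
  "{S \<in> wedge_index (Suc p) (Suc m). Suc p \<in> S} = insert (Suc p) ` wedge_index p m"
proof (intro equalityI subsetI)
  fix S assume S: "S \<in> {S \<in> wedge_index (Suc p) (Suc m). Suc p \<in> S}"
  then have "finite S" unfolding wedge_index_def using finite_subset by blast
  then have "S - {Suc p} \<in> wedge_index p m"
    using S unfolding wedge_index_def by (auto simp: le_Suc_eq)
  moreover have "S = insert (Suc p) (S - {Suc p})" using S by auto
  ultimately show "S \<in> insert (Suc p) ` wedge_index p m" by blast
next
  fix S assume "S \<in> insert (Suc p) ` wedge_index p m"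
  then obtain T where T: "T \<in> wedge_index p m" "S = insert (Suc p) T" by blast
  then have "finite T" "Suc p \<notin> T" unfolding wedge_index_def using finite_subset by auto
  then show "S \<in> {S \<in> wedge_index (Suc p) (Suc m). Suc p \<in> S}"
    using T unfolding wedge_index_def by auto
qed

lemma complex_form_append_std_basis_vec:
  fixes vs :: "(nat \<Rightarrow> 'a::field) list"
  assumes lv: "length vs = Suc m"
  shows "complex_form (Suc p) (Suc m) c (vs @ [std_basis_vec (Suc p)])
       = complex_form p m (contract (Suc p) c) vs"
proof -
  have notin: "Suc p \<notin> T" if "T \<in> wedge_index p m" for T
    using that unfolding wedge_index_def by auto
  have "complex_form (Suc p) (Suc m) c (vs @ [std_basis_vec (Suc p)])
      = (\<Sum>S\<in>wedge_index (Suc p) (Suc m).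
           if Suc p \<in> S then c S * pluecker vs (S - {Suc p}) else 0)"
    unfolding complex_form_def wedge_index_def
    by (rule sum.cong[OF refl]) (simp add: pluecker_append_std_basis_vec[OF lv])
  also have "\<dots> = (\<Sum>S\<in>insert (Suc p) ` wedge_index p m. c S * pluecker vs (S - {Suc p}))"
    unfolding sum.inter_filter[OF finite_wedge_index, symmetric] wedge_index_Suc_containing ..
  also have "\<dots> = complex_form p m (contract (Suc p) c) vs"
    unfolding complex_form_def contract_def using notin
    by (subst sum.reindex) (auto intro!: inj_onI sum.cong simp: insert_ident)
  finally show ?thesis .
qed

lemma vector_in_hyperplane_off_subspace:
  fixes us :: "(nat \<Rightarrow> 'a::field) list"
  assumes W: "proj_subspace (Suc p) (Suc m) W" and UW: "lspan (us @ [std_basis_vec (Suc p)]) \<subseteq> W"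
    and lu: "length us = m"
  obtains x where "in_Fn p x" "x \<in> W" "x \<notin> lspan (us @ [std_basis_vec (Suc p)])"
proof -
  let ?e = "std_basis_vec (Suc p) :: nat \<Rightarrow> 'a"
  let ?U = "lspan (us @ [?e])"
  obtain ws where ws: "length ws = Suc (Suc m)" "\<forall>v\<in>set ws. in_Fn (Suc p) v"
    "lin_indep ws" "W = lspan ws"
    using W unfolding proj_subspace_def is_basis_def by auto
  obtain i where i: "i < Suc (Suc m)" "ws ! i \<notin> ?U"
    using not_lin_indep_in_lspan_of_shorter[OF ws(3), of "us @ [?e]"] ws(1) lu by auto
  define w where "w = ws ! i"
  have eU: "?e \<in> ?U" using lspan_nth[of "length us" "us @ [?e]"] by simp
  have wW: "w \<in> W" unfolding w_def ws(4) by (rule lspan_nth) (use i ws(1) in simp)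
  have w_Fn: "in_Fn (Suc p) w" using ws(2) i ws(1) unfolding w_def by simp
  define x where "x = (\<lambda>t. w t - w (Suc p) * ?e t)"
  show thesis
  proof
    show "in_Fn p x" unfolding in_Fn_def
    proof (intro allI impI)
      fix t assume "p < t"
      then consider "t = Suc p" | "Suc p < t" by linarith
      then show "x t = 0" by cases (use w_Fn in \<open>auto simp: x_def std_basis_vec_def in_Fn_def\<close>)
    qed
    show "x \<in> W" unfolding x_def using wW UW eU ws(4)
      by (metis (no_types) lspan_diff lspan_smult subsetD)
    show "x \<notin> ?U"
    proof
      assume "x \<in> ?U"
      then have "(\<lambda>t. x t + w (Suc p) * ?e t) \<in> ?U" using eU lspan_add lspan_smult by blast
      moreover have "(\<lambda>t. x t + w (Suc p) * ?e t) = w" unfolding x_def by auto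
      ultimately show False using i(2) w_def by simp
    qed
  qed
qed

lemma singular_complex_of_append_std_basis_vec:
  fixes us :: "(nat \<Rightarrow> 'a::field) list" and c :: "nat set \<Rightarrow> 'a"
  assumes lu: "length us = m" and ind: "lin_indep us" and us_Fn: "\<forall>v\<in>set us. in_Fn p v"
    and vanish: "\<And>x. in_Fn p x \<Longrightarrow> x \<notin> lspan us \<Longrightarrow>
                   complex_form p m (contract (Suc p) c) (us @ [x]) = 0"
  shows "singular (Suc p) (Suc m) (complex_of (Suc p) (Suc m) c) (lspan (us @ [std_basis_vec (Suc p)]))"
  unfolding singular_def
proof (intro conjI allI impI)
  let ?e = "std_basis_vec (Suc p) :: nat \<Rightarrow> 'a"
  let ?U = "lspan (us @ [?e])"
  have "lin_indep (us @ [?e])" by (rule lin_indep_append[OF ind std_basis_vec_notin_lspan[OF us_Fn]])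
  moreover have "\<forall>v\<in>set (us @ [?e]). in_Fn (Suc p) v"
    using us_Fn in_Fn_std_basis_vec[of "Suc p" "Suc p"] unfolding in_Fn_def by auto
  ultimately show "proj_subspace (Suc p) (Suc m - 1) ?U"
    unfolding proj_subspace_def is_basis_def using lu by (intro exI[of _ "us @ [?e]"]) simp
  fix W assume "proj_subspace (Suc p) (Suc m) W \<and> ?U \<subseteq> W"
  then have W: "proj_subspace (Suc p) (Suc m) W" and UW: "?U \<subseteq> W" by auto
  obtain ws where ws: "is_basis (Suc p) (Suc m) ws W"
    using W unfolding proj_subspace_def by blast
  obtain x where x: "in_Fn p x" "x \<in> W" "x \<notin> ?U"
    using vector_in_hyperplane_off_subspace[OF W UW lu] .
  have x_us: "x \<notin> lspan us" using x(3) lspan_subset_append by blast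
  let ?zs = "(us @ [x]) @ [?e]"
  have ind_ux: "lin_indep (us @ [x])" by (rule lin_indep_append[OF ind x_us])
  have "\<forall>v\<in>set (us @ [x]). in_Fn p v" using us_Fn x(1) by simp
  then have "lin_indep ?zs" by (rule lin_indep_append[OF ind_ux std_basis_vec_notin_lspan])
  moreover have "?zs ! j \<in> lspan ws" if j: "j < Suc (Suc m)" for j
  proof -
    consider "j < m" | "j = m" | "j = Suc m" using j by linarith
    then have "?zs ! j \<in> W"
    proof cases
      case 1
      then show ?thesis using UW lspan_nth[of j "us @ [?e]"] lu by (auto simp: nth_append)
    next
      case 2
      then show ?thesis using x(2) lu by (simp add: nth_append)
    next
      case 3
      then show ?thesis using UW lspan_nth[of m "us @ [?e]"] lu by (auto simp: nth_append)
    qed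
    then show ?thesis using ws unfolding is_basis_def by simp
  qed
  ultimately obtain d where "d \<noteq> 0" "\<And>S. pluecker ?zs S = d * pluecker ws S"
    using pluecker_lspan_proportional[of ?zs "Suc (Suc m)" ws] ws lu unfolding is_basis_def by auto
  moreover have "complex_form (Suc p) (Suc m) c ?zs = 0"
    using complex_form_append_std_basis_vec[of "us @ [x]" m p c] lu vanish[OF x(1) x_us] by simp
  ultimately have "complex_form (Suc p) (Suc m) c ws = 0"
    using complex_form_proportional[of ?zs d ws] by simp
  then show "W \<in> complex_of (Suc p) (Suc m) c" using ws unfolding complex_of_def by blast
qed

lemma mem_complex_of_iff:
  fixes vs :: "(nat \<Rightarrow> 'a::field) list"
  assumes vs: "is_basis n h vs W"
  shows "W \<in> complex_of n h c \<longleftrightarrow> complex_form n h c vs = 0"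
proof
  assume "W \<in> complex_of n h c"
  then obtain ws where ws: "is_basis n h ws W" "complex_form n h c ws = 0"
    unfolding complex_of_def by blast
  have vs_ws: "vs ! i \<in> lspan ws" if "i < Suc h" for i
    using vs ws(1) lspan_nth[of i vs] that unfolding is_basis_def by simp
  have "lin_indep vs" "length vs = Suc h" "length ws = Suc h"
    using vs ws(1) unfolding is_basis_def by auto
  then obtain d where "\<And>S. pluecker vs S = d * pluecker ws S"
    using pluecker_lspan_proportional[OF _ _ _ vs_ws] by (metis (no_types))
  then show "complex_form n h c vs = 0" using complex_form_proportional ws(2) by (metis mult_zero_right)
next
  assume "complex_form n h c vs = 0"
  then show "W \<in> complex_of n h c" using vs unfolding complex_of_def by blast
qed

lemma contract_nonzero_if_no_singular:
  fixes c :: "nat set \<Rightarrow> 'a::field"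
  assumes m: "m \<le> Suc p"
    and no_sing: "\<forall>U. \<not> singular (Suc p) (Suc m) (complex_of (Suc p) (Suc m) c) U"
  shows "\<exists>S\<in>wedge_index p m. contract (Suc p) c S \<noteq> 0"
proof (rule ccontr)
  assume "\<not> ?thesis"
  then have "complex_form p m (contract (Suc p) c) vs = 0" for vs
    unfolding complex_form_def by simp
  moreover have "\<forall>v\<in>set (map std_basis_vec [0..<m]). in_Fn p v"
    using m by (auto intro: in_Fn_std_basis_vec)
  ultimately have "singular (Suc p) (Suc m) (complex_of (Suc p) (Suc m) c)
                     (lspan (map std_basis_vec [0..<m] @ [std_basis_vec (Suc p)]))"
    by (intro singular_complex_of_append_std_basis_vec lin_indep_std_basis_vecs) simp_all
  with no_sing show False by blast
qed

lemma no_singular_complex_of_contract: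
  fixes c :: "nat set \<Rightarrow> 'a::field"
  assumes m: "1 \<le> m"
    and no_sing: "\<forall>U. \<not> singular (Suc p) (Suc m) (complex_of (Suc p) (Suc m) c) U"
  shows "\<not> singular p m (complex_of p m (contract (Suc p) c)) U"
proof
  assume sg: "singular p m (complex_of p m (contract (Suc p) c)) U"
  then obtain us where us: "length us = m" "\<forall>v\<in>set us. in_Fn p v" "lin_indep us" "U = lspan us"
    unfolding singular_def proj_subspace_def is_basis_def using m by auto
  have "complex_form p m (contract (Suc p) c) (us @ [x]) = 0"
    if x: "in_Fn p x" "x \<notin> lspan us" for x
  proof -
    have "is_basis p m (us @ [x]) (lspan (us @ [x]))"
      unfolding is_basis_def using lin_indep_append[OF us(3) x(2)] us(1,2) x(1) by auto
    moreover have "lspan (us @ [x]) \<in> complex_of p m (contract (Suc p) c)"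
      using sg calculation lspan_subset_append us(4)
      unfolding singular_def proj_subspace_def by blast
    ultimately show ?thesis using mem_complex_of_iff by blast
  qed
  then have "singular (Suc p) (Suc m) (complex_of (Suc p) (Suc m) c)
               (lspan (us @ [std_basis_vec (Suc p)]))"
    by (intro singular_complex_of_append_std_basis_vec[OF us(1,3,2)])
  with no_sing show False by blast
qed

lemma nonsingular_linear_complex_contract:
  fixes K :: "(nat \<Rightarrow> 'a::field) set set"
  assumes "1 \<le> m" and "m \<le> Suc p"
    and "linear_complex (Suc p) (Suc m) K" and "\<forall>U. \<not> singular (Suc p) (Suc m) K U"
  shows "\<exists>K' :: (nat \<Rightarrow> 'a) set set. linear_complex p m K' \<and> (\<forall>U. \<not> singular p m K' U)"
proof -
  obtain c :: "nat set \<Rightarrow> 'a" where K: "K = complex_of (Suc p) (Suc m) c"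
    using assms(3) unfolding linear_complex_iff_complex_of by blast
  have "linear_complex p m (complex_of p m (contract (Suc p) c))"
    unfolding linear_complex_iff_complex_of
    using contract_nonzero_if_no_singular assms(2,4) K by blast
  moreover have "\<forall>U. \<not> singular p m (complex_of p m (contract (Suc p) c)) U"
    using no_singular_complex_of_contract assms(1,4) K by blast
  ultimately show ?thesis by blast
qed

lemma nonsingular_linear_complex_contract_iter:
  assumes "1 \<le> k" and "k + d + 1 \<le> n"
    and "\<exists>K :: (nat \<Rightarrow> 'a::field) set set.
           linear_complex n (k + d) K \<and> (\<forall>U. \<not> singular n (k + d) K U)"
  shows "\<exists>K :: (nat \<Rightarrow> 'a) set set.
           linear_complex (n - d) k K \<and> (\<forall>U. \<not> singular (n - d) k K U)"
  using assms(2,3)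
proof (induction d arbitrary: n)
  case 0
  then show ?case by simp
next
  case (Suc d)
  then obtain p where n: "n = Suc p" by (cases n) auto
  have "\<exists>K :: (nat \<Rightarrow> 'a) set set. linear_complex p (k + d) K \<and> (\<forall>U. \<not> singular p (k + d) K U)"
    using Suc.prems(2) n nonsingular_linear_complex_contract[of "k + d" p] assms(1) Suc.prems(1)
    by auto
  then show ?case using Suc.IH[of p] Suc.prems(1) n by simp
qed

theorem proposition6p1:
  fixes k h n :: nat
  assumes "1 \<le> k" and "k \<le> h" and "h + 1 \<le> n"
    and "\<exists>K :: (nat \<Rightarrow> 'a::field) set set.
           linear_complex n h K \<and> (\<forall>U. \<not> singular n h K U)"
  shows "\<exists>K :: (nat \<Rightarrow> 'a) set set.
           linear_complex (n + k - h) k K \<and> (\<forall>U. \<not> singular (n + k - h) k K U)"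
proof -
  obtain d where h: "h = k + d" using le_Suc_ex[OF assms(2)] by blast
  moreover have "n + k - h = n - d" using h by simp
  ultimately show ?thesis
    using nonsingular_linear_complex_contract_iter[OF assms(1)] assms(3,4) by simp
qed

end
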